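(* In the setting described in the context, for all partitions $\lambda^{(1)},\dots,\lambda^{(N)}$, $$ \mathrm{Prob}\big(\lambda(v_i)=\lambda^{(i)}\ \text{for } 1\le i\le N\big)=\frac1Z\, s_{\lambda^{(1)}}(X^-_1)\,\prod_{i=1}^{N-1}\Big(\sum_{\nu} s_{\lambda^{(i)}/\nu}(X^+_i)\, s_{\lambda^{(i+1)}/\nu}(X^-_{i+1})\Big)\, s_{\lambda^{(N)}}(X^+_N), $$ where the sum is over all partitions $\nu$, $X^-_i=(x^-_m)_{m\in\mathbb Z+\frac12,\ u_{i-1}<m<v_i}$ and $X^+_i=(x^+_m)_{m\in\mathbb Z+\frac12,\ v_i<m<u_i}$. That is, the joint law of $(\lambda(v_1),\dots,\lambda(v_N))$ is a Schur process whose parameters are the polynomial specializations $X^\pm_i$.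
   Context: Fix an integer $N\ge1$ and integers $u_0<v_1<u_1<v_2<\dots<u_{N-1}<v_N<u_N$. For each integer $t$ with $u_0<t<u_N$ fix $q_t\in(0,1)$. For a half-integer $m\in(\mathbb Z+\frac12)\cap(u_0,u_N)$ write $m\in D^+$ if $v_i<m<u_i$ for some $1\le i\le N$, and $m\in D^-$ if $u_{i-1}<m<v_i$ for some $1\le i\le N$. For partitions, $\lambda\succ\mu$ (equivalently $\mu\prec\lambda$) means $\lambda_1\ge\mu_1\ge\lambda_2\ge\mu_2\ge\cdots$. A configuration is a sequence of partitions $(\lambda(t))_{t\in\mathbb Z}$ such that: - $\lambda(t)=\emptyset$ for $t\le u_0$ and for $t\ge u_N$; - for every half-integer $m\in(u_0,u_N)$: if $m\in D^-$ then $\lambda(m-\frac12)\prec\lambda(m+\frac12)$, and if $m\in D^+$ then $\lambda(m-\frac12)\succ\lambda(m+\frac12)$. These are exactly the sequences of diagonal slices of skew plane partitions with given inner shape (corners at the $v_i,u_i$) inside a box. The weight of a configuration is $W=\prod_{u_0<t<u_N} q_t^{|\lambda(t)|}$, where $|\lambda|=\sum_i\lambda_i$. The partition function is $Z=\sum W$ over all configurations, and the probability of a configuration is $W/Z$. Put $x^+_m=\prod_{t\in\mathbb Z,\,u_0<t<m}q_t$ and $x^-_m=(x^+_m)^{-1}$ for half-integers $m$. Here $s_{\lambda/\mu}(x_1,\dots,x_n)$ is the skew Schur polynomial, which is zero unless $\mu\subset\lambda$, and $s_\lambda=s_{\lambda/\emptyset}$. *)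

theory Defs
  imports "HOL-Analysis.Analysis"
begin

text \<open>Partitions are weakly decreasing functions nat => nat with finite support;
  the part lambda_(i+1) is stored at index i (0-based).\<close>

definition partitions :: "(nat \<Rightarrow> nat) set" where
  "partitions = {l. (\<forall>i. l (Suc i) \<le> l i) \<and> finite {i. l i \<noteq> 0}}"

definition empty_part :: "nat \<Rightarrow> nat" where
  "empty_part = (\<lambda>_. 0)"

definition psize :: "(nat \<Rightarrow> nat) \<Rightarrow> nat" where
  "psize l = (\<Sum>i\<in>{i. l i \<noteq> 0}. l i)"

definition succ_part :: "(nat \<Rightarrow> nat) \<Rightarrow> (nat \<Rightarrow> nat) \<Rightarrow> bool" where
  "succ_part l m \<longleftrightarrow> (\<forall>i. m i \<le> l i \<and> l (Suc i) \<le> m i)"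

definition subpart :: "(nat \<Rightarrow> nat) \<Rightarrow> (nat \<Rightarrow> nat) \<Rightarrow> bool" where
  "subpart m l \<longleftrightarrow> (\<forall>i. m i \<le> l i)"

definition skew_cells :: "(nat \<Rightarrow> nat) \<Rightarrow> (nat \<Rightarrow> nat) \<Rightarrow> (nat \<times> nat) set" where
  "skew_cells l m = {(i, j). m i \<le> j \<and> j < l i}"

definition ssyt :: "(nat \<Rightarrow> nat) \<Rightarrow> (nat \<Rightarrow> nat) \<Rightarrow> nat \<Rightarrow> ((nat \<times> nat) \<Rightarrow> nat) set" where
  "ssyt l m n = {T \<in> skew_cells l m \<rightarrow>\<^sub>E {0..<n}.
      (\<forall>i j. (i, j) \<in> skew_cells l m \<and> (i, Suc j) \<in> skew_cells l m \<longrightarrow> T (i, j) \<le> T (i, Suc j)) \<and>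
      (\<forall>i j. (i, j) \<in> skew_cells l m \<and> (Suc i, j) \<in> skew_cells l m \<longrightarrow> T (i, j) < T (Suc i, j))}"

definition skew_schur :: "(nat \<Rightarrow> nat) \<Rightarrow> (nat \<Rightarrow> nat) \<Rightarrow> real list \<Rightarrow> real" where
  "skew_schur l m xs = (if subpart m l then
      (\<Sum>T\<in>ssyt l m (length xs). \<Prod>c\<in>skew_cells l m. xs ! (T c)) else 0)"

definition schur :: "(nat \<Rightarrow> nat) \<Rightarrow> real list \<Rightarrow> real" where
  "schur l xs = skew_schur l empty_part xs"

text \<open>The half-integer m = k + 1/2 is encoded by the integer k.\<close>

definition in_Dminus :: "nat \<Rightarrow> (nat \<Rightarrow> int) \<Rightarrow> (nat \<Rightarrow> int) \<Rightarrow> int \<Rightarrow> bool" where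
  "in_Dminus N u v k \<longleftrightarrow> (\<exists>i\<in>{1..N}. u (i - 1) \<le> k \<and> k + 1 \<le> v i)"

definition in_Dplus :: "nat \<Rightarrow> (nat \<Rightarrow> int) \<Rightarrow> (nat \<Rightarrow> int) \<Rightarrow> int \<Rightarrow> bool" where
  "in_Dplus N u v k \<longleftrightarrow> (\<exists>i\<in>{1..N}. v i \<le> k \<and> k + 1 \<le> u i)"

definition configs :: "nat \<Rightarrow> (nat \<Rightarrow> int) \<Rightarrow> (nat \<Rightarrow> int) \<Rightarrow> (int \<Rightarrow> nat \<Rightarrow> nat) set" where
  "configs N u v = {L. (\<forall>t. L t \<in> partitions) \<and>
      (\<forall>t. (t \<le> u 0 \<or> u N \<le> t) \<longrightarrow> L t = empty_part) \<and>
      (\<forall>k. u 0 \<le> k \<and> k + 1 \<le> u N \<longrightarrow>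
          (in_Dminus N u v k \<longrightarrow> succ_part (L (k + 1)) (L k)) \<and>
          (in_Dplus N u v k \<longrightarrow> succ_part (L k) (L (k + 1))))}"

definition weight :: "nat \<Rightarrow> (nat \<Rightarrow> int) \<Rightarrow> (int \<Rightarrow> real) \<Rightarrow> (int \<Rightarrow> nat \<Rightarrow> nat) \<Rightarrow> real" where
  "weight N u q L = (\<Prod>t\<in>{u 0<..<u N}. q t ^ psize (L t))"

definition partition_fn :: "nat \<Rightarrow> (nat \<Rightarrow> int) \<Rightarrow> (nat \<Rightarrow> int) \<Rightarrow> (int \<Rightarrow> real) \<Rightarrow> real" where
  "partition_fn N u v q = (\<Sum>\<^sub>\<infinity>L\<in>configs N u v. weight N u q L)"

definition prob :: "nat \<Rightarrow> (nat \<Rightarrow> int) \<Rightarrow> (nat \<Rightarrow> int) \<Rightarrow> (int \<Rightarrow> real)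
    \<Rightarrow> ((int \<Rightarrow> nat \<Rightarrow> nat) \<Rightarrow> bool) \<Rightarrow> real" where
  "prob N u v q E = (\<Sum>\<^sub>\<infinity>L\<in>{L \<in> configs N u v. E L}. weight N u q L) / partition_fn N u v q"

text \<open>x^+_{k+1/2} = prod of q_t over u_0 < t < k + 1/2, i.e. u_0 < t <= k\<close>
definition xplus :: "(nat \<Rightarrow> int) \<Rightarrow> (int \<Rightarrow> real) \<Rightarrow> int \<Rightarrow> real" where
  "xplus u q k = (\<Prod>t\<in>{u 0<..k}. q t)"

definition xminus :: "(nat \<Rightarrow> int) \<Rightarrow> (int \<Rightarrow> real) \<Rightarrow> int \<Rightarrow> real" where
  "xminus u q k = inverse (xplus u q k)"

text \<open>X^-_i: half-integers u_{i-1} < m < v_i; X^+_i: half-integers v_i < m < u_i\<close>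
definition Xminus :: "(nat \<Rightarrow> int) \<Rightarrow> (nat \<Rightarrow> int) \<Rightarrow> (int \<Rightarrow> real) \<Rightarrow> nat \<Rightarrow> real list" where
  "Xminus u v q i = map (xminus u q) [u (i - 1) .. v i - 1]"

definition Xplus :: "(nat \<Rightarrow> int) \<Rightarrow> (nat \<Rightarrow> int) \<Rightarrow> (int \<Rightarrow> real) \<Rightarrow> nat \<Rightarrow> real list" where
  "Xplus u v q i = map (xplus u q) [v i .. u i - 1]"

end

theory Submission
  imports Defs
begin

text \<open>
  The weight \<open>\<Prod> q\<^sub>t\<^bsup>|\<lambda>(t)|\<^esup>\<close> telescopes, since \<open>q\<^sub>t = x\<^sup>+\<^sub>t\<^sub>+\<^sub>1\<^sub>/\<^sub>2 / x\<^sup>+\<^sub>t\<^sub>-\<^sub>1\<^sub>/\<^sub>2\<close> and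
  \<open>\<lambda>\<close> is empty at both ends, into a product of one factor per step \<open>t \<rightarrow> t + 1\<close>: a power
  of \<open>x\<^sup>-\<^sub>m\<close> on \<open>D\<^sup>-\<close>, where the slices grow by horizontal strips, and a power of \<open>x\<^sup>+\<^sub>m\<close>
  on \<open>D\<^sup>+\<close>, where they shrink. Summing over the configurations with prescribed
  \<open>\<lambda>(v\<^sub>i)\<close> is therefore a product of transfer sums, cut at the \<open>v\<^sub>i\<close> and glued at the
  \<open>u\<^sub>i\<close>, where the slice \<open>\<nu>\<close> is free. A growing segment from \<open>\<mu>\<close> to \<open>\<lambda>\<close> sums over
  interlacing chains \<open>\<mu> \<prec> \<kappa>\<^sub>1 \<prec> \<dots> \<prec> \<lambda>\<close>, which is \<open>s\<^bsub>\<lambda>/\<mu>\<^esub>(X\<^sup>-)\<close> by the branching rule;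
  a shrinking segment gives the same sum with the variables \<open>X\<^sup>+\<close> in reverse order, which
  is again \<open>s\<^bsub>\<lambda>/\<nu>\<^esub>(X\<^sup>+)\<close> because skew Schur polynomials are symmetric (Bender--Knuth).
  All slices of such configurations lie below the pinned ones, so every sum is finite.
\<close>

section \<open>Partitions\<close>

lemma partition_support_finite: "l \<in> partitions \<Longrightarrow> finite {i. l i \<noteq> 0}"
  by (simp add: partitions_def)

lemma empty_part_in_partitions: "empty_part \<in> partitions"
  by (simp add: partitions_def empty_part_def)

lemma psize_empty_part [simp]: "psize empty_part = 0"
  by (simp add: psize_def empty_part_def)

lemma subpart_refl [simp]: "subpart l l"
  by (simp add: subpart_def)

lemma subpart_trans: "subpart a b \<Longrightarrow> subpart b c \<Longrightarrow> subpart a c"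
  by (auto simp: subpart_def intro: le_trans)

lemma succ_part_imp_subpart: "succ_part k m \<Longrightarrow> subpart m k"
  by (simp add: succ_part_def subpart_def)

lemma subpart_support: "subpart m l \<Longrightarrow> {i. m i \<noteq> 0} \<subseteq> {i. l i \<noteq> 0}"
  unfolding subpart_def by (metis (mono_tags) Collect_mono le_0_eq)

lemma finite_support_subpart: "subpart m l \<Longrightarrow> finite {i. l i \<noteq> 0} \<Longrightarrow> finite {i. m i \<noteq> 0}"
  using subpart_support by (rule finite_subset)

lemma finite_subparts:
  assumes "finite {i. l i \<noteq> 0}"
  shows "finite {k. subpart k l}"
proof -
  let ?A = "{i. l i \<noteq> 0}"
  have "{k. subpart k l} \<subseteq> {f. \<forall>x. (x \<in> ?A \<longrightarrow> f x \<in> {0..sum l ?A}) \<and> (x \<notin> ?A \<longrightarrow> f x = 0)}"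
  proof (intro subsetI CollectI allI conjI impI)
    fix f x assume "f \<in> {k. subpart k l}"
    then have fx: "f x \<le> l x" by (simp add: subpart_def)
    show "x \<notin> ?A \<Longrightarrow> f x = 0" using fx by simp
    assume "x \<in> ?A"
    then have "l x \<le> sum l ?A" using assms by (intro member_le_sum) auto
    then show "f x \<in> {0..sum l ?A}" using fx by simp
  qed
  then show ?thesis
    by (rule finite_subset) (intro finite_set_of_finite_funs assms, simp)
qed

lemma psize_eq_sum_lessThan:
  "{i. l i \<noteq> 0} \<subseteq> {..<M} \<Longrightarrow> psize l = (\<Sum>i<M. l i)"
  unfolding psize_def by (rule sum.mono_neutral_left) auto

lemma psize_mono:
  assumes "subpart m l" "finite {i. l i \<noteq> 0}"
  shows "psize m \<le> psize l"
proof -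
  obtain M where M: "{i. l i \<noteq> 0} \<subseteq> {..<M}"
    using assms(2) finite_nat_iff_bounded by blast
  have "psize m = (\<Sum>i<M. m i)"
    using M subpart_support[OF assms(1)] by (intro psize_eq_sum_lessThan) auto
  also have "\<dots> \<le> (\<Sum>i<M. l i)"
    using assms(1) by (intro sum_mono) (simp add: subpart_def)
  also have "\<dots> = psize l"
    using M by (rule psize_eq_sum_lessThan[symmetric])
  finally show ?thesis .
qed

lemma skew_cells_iff: "(i, j) \<in> skew_cells l m \<longleftrightarrow> m i \<le> j \<and> j < l i"
  by (simp add: skew_cells_def)

lemma skew_cells_eq_Sigma:
  assumes "{i. l i \<noteq> 0} \<subseteq> {..<M}"
  shows "skew_cells l m = Sigma {..<M} (\<lambda>i. {m i..<l i})"
proof -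
  have "i < M" if "j < l i" for i j
    using that assms by (metis (mono_tags) less_nat_zero_code lessThan_iff mem_Collect_eq subset_eq)
  then show ?thesis by (auto simp: skew_cells_def)
qed

lemma finite_skew_cells: "finite {i. l i \<noteq> 0} \<Longrightarrow> finite (skew_cells l m)"
  using finite_nat_iff_bounded[of "{i. l i \<noteq> 0}"] by (auto simp: skew_cells_eq_Sigma)

lemma card_skew_cells:
  assumes "subpart m l" "finite {i. l i \<noteq> 0}"
  shows "card (skew_cells l m) = psize l - psize m"
proof -
  obtain M where M: "{i. l i \<noteq> 0} \<subseteq> {..<M}"
    using assms(2) finite_nat_iff_bounded by blast
  have "card (skew_cells l m) = (\<Sum>i<M. l i - m i)"
    by (simp add: skew_cells_eq_Sigma[OF M])
  also have "\<dots> = (\<Sum>i<M. l i) - (\<Sum>i<M. m i)"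
    using assms(1) by (intro sum_subtractf_nat) (simp add: subpart_def)
  also have "\<dots> = psize l - psize m"
    using M subpart_support[OF assms(1)] by (simp add: psize_eq_sum_lessThan[of _ M])
  finally show ?thesis .
qed

lemma succ_part_in_partitions:
  "succ_part k m \<Longrightarrow> subpart k l \<Longrightarrow> finite {i. l i \<noteq> 0} \<Longrightarrow> k \<in> partitions"
  unfolding partitions_def using finite_support_subpart[of k l]
  by (auto simp: succ_part_def intro: le_trans)

section \<open>The branching rule\<close>

definition hstrips :: "(nat \<Rightarrow> nat) \<Rightarrow> (nat \<Rightarrow> nat) \<Rightarrow> (nat \<Rightarrow> nat) set" where
  "hstrips m l = {k. succ_part k m \<and> subpart k l}"

text \<open>Unrolled, a sum over interlacing chains \<open>m \<prec> k\<^sub>1 \<prec> \<dots> \<prec> k\<^sub>n = l\<close>; it equals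
  \<open>s\<^bsub>l/m\<^esub>(xs)\<close> by the branching rule.\<close>

fun chain_sum :: "(nat \<Rightarrow> nat) \<Rightarrow> (nat \<Rightarrow> nat) \<Rightarrow> real list \<Rightarrow> real" where
  "chain_sum m l [] = (if m = l then 1 else 0)"
| "chain_sum m l (x # xs) = (\<Sum>k\<in>hstrips m l. x ^ (psize k - psize m) * chain_sum k l xs)"

lemma finite_hstrips: "finite {i. l i \<noteq> 0} \<Longrightarrow> finite (hstrips m l)"
  by (rule finite_subset[OF _ finite_subparts]) (auto simp: hstrips_def)

lemma hstripsD: "k \<in> hstrips m l \<Longrightarrow> subpart m k \<and> subpart k l"
  by (simp add: hstrips_def succ_part_imp_subpart)

lemma chain_sum_nonzero_imp_subpart:
  assumes "chain_sum m l xs \<noteq> 0"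
  shows "subpart m l"
proof (cases xs)
  case Nil
  then show ?thesis using assms by (simp split: if_splits)
next
  case (Cons x xs')
  then obtain k where "k \<in> hstrips m l" using assms by fastforce
  then show ?thesis by (blast dest: hstripsD intro: subpart_trans)
qed

lemma ssytD:
  assumes "T \<in> ssyt l m n"
  shows "T \<in> skew_cells l m \<rightarrow>\<^sub>E {0..<n}"
    and "\<And>i j. (i, j) \<in> skew_cells l m \<Longrightarrow> (i, Suc j) \<in> skew_cells l m \<Longrightarrow> T (i, j) \<le> T (i, Suc j)"
    and "\<And>i j. (i, j) \<in> skew_cells l m \<Longrightarrow> (Suc i, j) \<in> skew_cells l m \<Longrightarrow> T (i, j) < T (Suc i, j)"
  using assms unfolding ssyt_def by auto

lemma ssytI:
  assumes "T \<in> skew_cells l m \<rightarrow>\<^sub>E {0..<n}"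
    and "\<And>i j. (i, j) \<in> skew_cells l m \<Longrightarrow> (i, Suc j) \<in> skew_cells l m \<Longrightarrow> T (i, j) \<le> T (i, Suc j)"
    and "\<And>i j. (i, j) \<in> skew_cells l m \<Longrightarrow> (Suc i, j) \<in> skew_cells l m \<Longrightarrow> T (i, j) < T (Suc i, j)"
  shows "T \<in> ssyt l m n"
  using assms unfolding ssyt_def by auto

lemma finite_ssyt: "finite {i. l i \<noteq> 0} \<Longrightarrow> finite (ssyt l m n)"
  by (rule finite_subset[of _ "skew_cells l m \<rightarrow>\<^sub>E {0..<n}"])
    (auto simp: ssyt_def finite_skew_cells intro!: finite_PiE)

definition add_zero_strip ::
    "(nat \<Rightarrow> nat) \<Rightarrow> (nat \<Rightarrow> nat) \<Rightarrow> (nat \<Rightarrow> nat) \<Rightarrow> (nat \<times> nat \<Rightarrow> nat) \<Rightarrow> (nat \<times> nat \<Rightarrow> nat)" where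
  "add_zero_strip m l k T = (\<lambda>c. if c \<in> skew_cells l m
      then (if c \<in> skew_cells k m then 0 else Suc (T c)) else undefined)"

text \<open>Inverse of \<open>add_zero_strip\<close>: in row \<open>i\<close> the zeros of \<open>T\<close> end at column
  \<open>zero_strip m l T i\<close>.\<close>

definition zero_strip :: "(nat \<Rightarrow> nat) \<Rightarrow> (nat \<Rightarrow> nat) \<Rightarrow> (nat \<times> nat \<Rightarrow> nat) \<Rightarrow> nat \<Rightarrow> nat" where
  "zero_strip m l T i = (LEAST j. m i \<le> j \<and> (l i \<le> j \<or> T (i, j) \<noteq> 0))"

lemma add_zero_strip_ssyt:
  assumes k: "k \<in> hstrips m l" and T: "T \<in> ssyt l k n"
  shows "add_zero_strip m l k T \<in> ssyt l m (Suc n)"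
proof -
  have km: "k (Suc i) \<le> m i" for i
    using k by (simp add: hstrips_def succ_part_def)
  have T_lt: "T c < n" if "c \<in> skew_cells l k" for c
    using ssytD(1)[OF T] that by auto
  show ?thesis
  proof (rule ssytI)
    show "add_zero_strip m l k T \<in> skew_cells l m \<rightarrow>\<^sub>E {0..<Suc n}"
    proof (rule PiE_I)
      fix c assume "c \<in> skew_cells l m"
      moreover have "c \<in> skew_cells l k" if "c \<in> skew_cells l m" "c \<notin> skew_cells k m"
        using that by (cases c) (auto simp: skew_cells_iff)
      ultimately show "add_zero_strip m l k T c \<in> {0..<Suc n}"
        using T_lt by (auto simp: add_zero_strip_def)
    qed (simp add: add_zero_strip_def)
  next
    fix i j assume "(i, j) \<in> skew_cells l m" "(i, Suc j) \<in> skew_cells l m"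
    then show "add_zero_strip m l k T (i, j) \<le> add_zero_strip m l k T (i, Suc j)"
      using ssytD(2)[OF T, of i j] by (auto simp: add_zero_strip_def skew_cells_iff)
  next
    fix i j assume "(i, j) \<in> skew_cells l m" "(Suc i, j) \<in> skew_cells l m"
    then show "add_zero_strip m l k T (i, j) < add_zero_strip m l k T (Suc i, j)"
      using ssytD(3)[OF T, of i j] km[of i] by (auto simp: add_zero_strip_def skew_cells_iff)
  qed
qed

lemma add_zero_strip_inj:
  assumes "k1 \<in> hstrips m l" "k2 \<in> hstrips m l" "T1 \<in> ssyt l k1 n" "T2 \<in> ssyt l k2 n"
    and eq: "add_zero_strip m l k1 T1 = add_zero_strip m l k2 T2"
  shows "k1 = k2 \<and> T1 = T2"
proof -
  have b: "m i \<le> k1 i" "k1 i \<le> l i" "m i \<le> k2 i" "k2 i \<le> l i" for i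
    using assms(1,2) by (auto simp: subpart_def dest: hstripsD)
  have "k1 i = k2 i" for i
  proof (rule ccontr)
    assume "k1 i \<noteq> k2 i"
    let ?c = "(i, min (k1 i) (k2 i))"
    have "?c \<in> skew_cells l m" "?c \<in> skew_cells k1 m \<longleftrightarrow> ?c \<notin> skew_cells k2 m"
      using b[of i] \<open>k1 i \<noteq> k2 i\<close> by (auto simp: skew_cells_iff)
    then have "add_zero_strip m l k1 T1 ?c \<noteq> add_zero_strip m l k2 T2 ?c"
      by (auto simp: add_zero_strip_def)
    then show False using eq by simp
  qed
  then have k: "k1 = k2" by auto
  have "T1 c = T2 c" for c
  proof (cases "c \<in> skew_cells l k1")
    case True
    obtain i j where c: "c = (i, j)" by (cases c)
    with True have "k1 i \<le> j" "j < l i" by (simp_all add: skew_cells_iff)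
    then have "c \<in> skew_cells l m" "c \<notin> skew_cells k1 m"
      using b[of i] by (simp_all add: skew_cells_iff c)
    then have "add_zero_strip m l k1 T1 c = Suc (T1 c)" "add_zero_strip m l k2 T2 c = Suc (T2 c)"
      using k by (simp_all add: add_zero_strip_def)
    then show ?thesis using eq by simp
  next
    case False
    then show ?thesis using PiE_arb[OF ssytD(1)[OF assms(3)]] PiE_arb[OF ssytD(1)[OF assms(4)]] k
      by simp
  qed
  with k show ?thesis by auto
qed

lemma zero_strip_spec:
  assumes l: "l \<in> partitions" and m: "m \<in> partitions" and ml: "subpart m l"
    and T: "T \<in> ssyt l m (Suc n)"
  shows "zero_strip m l T \<in> hstrips m l"
    and "\<And>c. c \<in> skew_cells (zero_strip m l T) m \<Longrightarrow> T c = 0"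
    and "\<And>c. c \<in> skew_cells l (zero_strip m l T) \<Longrightarrow> T c \<noteq> 0"
proof -
  let ?K = "zero_strip m l T"
  have ml': "m i \<le> l i" for i using ml by (simp add: subpart_def)
  have K1: "m i \<le> ?K i \<and> (l i \<le> ?K i \<or> T (i, ?K i) \<noteq> 0)" for i
    unfolding zero_strip_def by (rule LeastI[of _ "l i"]) (simp add: ml')
  have K2: "?K i \<le> l i" for i
    unfolding zero_strip_def by (rule Least_le) (simp add: ml')
  show K3: "T c = 0" if c_in: "c \<in> skew_cells ?K m" for c
  proof -
    obtain i j where c: "c = (i, j)" "m i \<le> j" "j < ?K i"
      using c_in by (cases c) (auto simp: skew_cells_iff)
    show ?thesis
      using not_less_Least[of j "\<lambda>j. m i \<le> j \<and> (l i \<le> j \<or> T (i, j) \<noteq> 0)"] c K2[of i]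
      unfolding zero_strip_def by auto
  qed
  show "T c \<noteq> 0" if c_in: "c \<in> skew_cells l ?K" for c
  proof -
    obtain i j where c: "c = (i, j)" "?K i \<le> j" "j < l i"
      using c_in by (cases c) (auto simp: skew_cells_iff)
    have "T (i, ?K i) \<le> T (i, ?K i + d)" if "?K i + d < l i" for d
      using that
    proof (induction d)
      case (Suc d)
      then have "T (i, ?K i + d) \<le> T (i, Suc (?K i + d))"
        using K1[of i] by (intro ssytD(2)[OF T]) (auto simp: skew_cells_iff)
      with Suc show ?case by simp
    qed simp
    from this[of "j - ?K i"] show ?thesis using K1[of i] c by auto
  qed
  have "?K (Suc i) \<le> m i" for i
  proof (rule ccontr)
    assume K_big: "\<not> ?K (Suc i) \<le> m i"
    have mono: "m (Suc i) \<le> m i" "l (Suc i) \<le> l i"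
      using l m by (simp_all add: partitions_def)
    have "(i, m i) \<in> skew_cells l m" "(Suc i, m i) \<in> skew_cells l m"
      "(Suc i, m i) \<in> skew_cells ?K m"
      using K_big K2[of "Suc i"] mono by (auto simp: skew_cells_iff)
    then show False using ssytD(3)[OF T, of i "m i"] K3 by simp
  qed
  then show "?K \<in> hstrips m l"
    using K1 K2 by (simp add: hstrips_def succ_part_def subpart_def)
qed

lemma bij_betw_add_zero_strip:
  assumes l: "l \<in> partitions" and m: "m \<in> partitions" and ml: "subpart m l"
  shows "bij_betw (\<lambda>(k, T). add_zero_strip m l k T)
           (SIGMA k:hstrips m l. ssyt l k n) (ssyt l m (Suc n))"
proof (rule bij_betwI')
  fix p p' assume "p \<in> (SIGMA k:hstrips m l. ssyt l k n)" "p' \<in> (SIGMA k:hstrips m l. ssyt l k n)"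
  then show "((\<lambda>(k, T). add_zero_strip m l k T) p = (\<lambda>(k, T). add_zero_strip m l k T) p') = (p = p')"
    using add_zero_strip_inj by (auto simp: prod_eq_iff)
next
  fix p assume "p \<in> (SIGMA k:hstrips m l. ssyt l k n)"
  then show "(\<lambda>(k, T). add_zero_strip m l k T) p \<in> ssyt l m (Suc n)"
    by (auto intro: add_zero_strip_ssyt)
next
  fix T assume T: "T \<in> ssyt l m (Suc n)"
  let ?K = "zero_strip m l T"
  let ?T = "restrict (\<lambda>c. T c - 1) (skew_cells l ?K)"
  note K = zero_strip_spec[OF l m ml T]
  have sub: "skew_cells l ?K \<subseteq> skew_cells l m"
    using K(1) by (auto simp: skew_cells_def hstrips_def succ_part_def intro: le_trans)
  have "?T \<in> ssyt l ?K n"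
  proof (rule ssytI)
    show "?T \<in> skew_cells l ?K \<rightarrow>\<^sub>E {0..<n}"
    proof (rule PiE_I)
      fix c assume c: "c \<in> skew_cells l ?K"
      then have "T c < Suc n" "T c \<noteq> 0" using ssytD(1)[OF T] sub K(3) by auto
      then show "?T c \<in> {0..<n}" using c by simp
    qed simp
  next
    fix i j assume cells: "(i, j) \<in> skew_cells l ?K" "(i, Suc j) \<in> skew_cells l ?K"
    then have "T (i, j) \<le> T (i, Suc j)" using ssytD(2)[OF T] sub by blast
    then show "?T (i, j) \<le> ?T (i, Suc j)" using cells by (simp add: diff_le_mono)
  next
    fix i j assume cells: "(i, j) \<in> skew_cells l ?K" "(Suc i, j) \<in> skew_cells l ?K"
    then have "T (i, j) < T (Suc i, j)" "T (i, j) \<noteq> 0" using ssytD(3)[OF T] sub K(3) by blast+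
    then show "?T (i, j) < ?T (Suc i, j)" using cells by simp
  qed
  moreover have "T = add_zero_strip m l ?K ?T"
  proof
    fix c
    have "c \<in> skew_cells l ?K" if "c \<in> skew_cells l m" "c \<notin> skew_cells ?K m"
      using that by (cases c) (auto simp: skew_cells_iff)
    then show "T c = add_zero_strip m l ?K ?T c"
      using PiE_arb[OF ssytD(1)[OF T]] K(2,3) by (auto simp: add_zero_strip_def)
  qed
  ultimately show "\<exists>p\<in>SIGMA k:hstrips m l. ssyt l k n. T = (\<lambda>(k, T). add_zero_strip m l k T) p"
    using K(1) by (intro bexI[of _ "(?K, ?T)"]) auto
qed

lemma add_zero_strip_weight:
  assumes l: "l \<in> partitions" and k: "k \<in> hstrips m l"
  shows "(\<Prod>c\<in>skew_cells l m. (x # xs) ! add_zero_strip m l k T c)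
       = x ^ (psize k - psize m) * (\<Prod>c\<in>skew_cells l k. xs ! T c)"
proof -
  have mk: "subpart m k" and kl: "subpart k l" using hstripsD[OF k] by auto
  have fl: "finite {i. l i \<noteq> 0}" using l by (rule partition_support_finite)
  have fk: "finite {i. k i \<noteq> 0}" using finite_support_subpart[OF kl fl] .
  have split: "skew_cells l m = skew_cells k m \<union> skew_cells l k"
    using mk kl by (auto simp: skew_cells_def subpart_def intro: le_trans less_le_trans)
  have disj: "skew_cells k m \<inter> skew_cells l k = {}" by (auto simp: skew_cells_def)
  have "(\<Prod>c\<in>skew_cells l m. (x # xs) ! add_zero_strip m l k T c)
      = (\<Prod>c\<in>skew_cells k m. (x # xs) ! add_zero_strip m l k T c)
        * (\<Prod>c\<in>skew_cells l k. (x # xs) ! add_zero_strip m l k T c)"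
    unfolding split using disj finite_skew_cells[OF fk] finite_skew_cells[OF fl]
    by (intro prod.union_disjoint) auto
  also have "(\<Prod>c\<in>skew_cells k m. (x # xs) ! add_zero_strip m l k T c) = x ^ (psize k - psize m)"
    using split card_skew_cells[OF mk fk] by (simp add: add_zero_strip_def)
  also have "(\<Prod>c\<in>skew_cells l k. (x # xs) ! add_zero_strip m l k T c) = (\<Prod>c\<in>skew_cells l k. xs ! T c)"
    using split disj by (intro prod.cong) (auto simp: add_zero_strip_def)
  finally show ?thesis .
qed

text \<open>Branching rule: the cells holding the smallest entry of a semistandard tableau form a
  horizontal strip.\<close>

lemma skew_schur_Cons:
  assumes l: "l \<in> partitions" and m: "m \<in> partitions"
  shows "skew_schur l m (x # xs) = (\<Sum>k\<in>hstrips m l. x ^ (psize k - psize m) * skew_schur l k xs)"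
proof (cases "subpart m l")
  case False
  then have "hstrips m l = {}" by (auto dest: hstripsD subpart_trans)
  with False show ?thesis by (simp add: skew_schur_def)
next
  case True
  have fl: "finite {i. l i \<noteq> 0}" using l by (rule partition_support_finite)
  have "skew_schur l m (x # xs)
      = (\<Sum>T\<in>ssyt l m (Suc (length xs)). \<Prod>c\<in>skew_cells l m. (x # xs) ! T c)"
    using True by (simp add: skew_schur_def)
  also have "\<dots> = (\<Sum>(k, T)\<in>(SIGMA k:hstrips m l. ssyt l k (length xs)).
                     \<Prod>c\<in>skew_cells l m. (x # xs) ! add_zero_strip m l k T c)"
    using sum.reindex_bij_betw[OF bij_betw_add_zero_strip[OF l m True],
        of "\<lambda>T. \<Prod>c\<in>skew_cells l m. (x # xs) ! T c"]
    by (simp add: split_def)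
  also have "\<dots> = (\<Sum>k\<in>hstrips m l. \<Sum>T\<in>ssyt l k (length xs).
                     x ^ (psize k - psize m) * (\<Prod>c\<in>skew_cells l k. xs ! T c))"
    using finite_hstrips[OF fl] finite_ssyt[OF fl]
    by (simp add: sum.Sigma[symmetric] add_zero_strip_weight[OF l])
  also have "\<dots> = (\<Sum>k\<in>hstrips m l. x ^ (psize k - psize m) * skew_schur l k xs)"
    by (intro sum.cong refl) (simp add: skew_schur_def sum_distrib_left hstrips_def)
  finally show ?thesis .
qed

lemma skew_schur_eq_chain_sum:
  assumes "l \<in> partitions" "m \<in> partitions"
  shows "skew_schur l m xs = chain_sum m l xs"
  using assms(2)
proof (induction xs arbitrary: m)
  case Nil
  show ?case
  proof (cases "m = l")
    case True
    have "skew_cells l l = {}" by (simp add: skew_cells_def)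
    then have "ssyt l l 0 = {\<lambda>_. undefined}" by (auto simp: ssyt_def)
    with True \<open>skew_cells l l = {}\<close> show ?thesis by (simp add: skew_schur_def)
  next
    case False
    have "ssyt l m 0 = {}" if "subpart m l"
    proof -
      obtain i where "m i < l i" using \<open>m \<noteq> l\<close> \<open>subpart m l\<close>
        by (metis ext le_neq_implies_less subpart_def)
      then have "(i, m i) \<in> skew_cells l m" by (simp add: skew_cells_iff)
      then show ?thesis by (auto simp: ssyt_def PiE_eq_empty_iff)
    qed
    with False show ?thesis by (simp add: skew_schur_def)
  qed
next
  case (Cons x xs)
  have "k \<in> partitions" if "k \<in> hstrips m l" for k
    using that assms(1) by (auto simp: hstrips_def intro: succ_part_in_partitions partition_support_finite)
  then show ?case using skew_schur_Cons[OF assms(1) Cons.prems] Cons.IH by simp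
qed

section \<open>Symmetry of skew Schur polynomials\<close>

definition interlaced_between :: "(nat \<Rightarrow> nat) \<Rightarrow> (nat \<Rightarrow> nat) \<Rightarrow> (nat \<Rightarrow> nat) set" where
  "interlaced_between m r = {k. succ_part k m \<and> succ_part r k}"

definition bk_lower :: "(nat \<Rightarrow> nat) \<Rightarrow> (nat \<Rightarrow> nat) \<Rightarrow> nat \<Rightarrow> nat" where
  "bk_lower m r i = max (m i) (r (Suc i))"

definition bk_upper :: "(nat \<Rightarrow> nat) \<Rightarrow> (nat \<Rightarrow> nat) \<Rightarrow> nat \<Rightarrow> nat" where
  "bk_upper m r i = (case i of 0 \<Rightarrow> r 0 | Suc j \<Rightarrow> min (r (Suc j)) (m j))"

lemma interlaced_between_iff_bk_bounds:
  "k \<in> interlaced_between m r \<longleftrightarrow> (\<forall>i. bk_lower m r i \<le> k i \<and> k i \<le> bk_upper m r i)"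
proof
  assume "k \<in> interlaced_between m r"
  then have "m i \<le> k i" "k (Suc i) \<le> m i" "k i \<le> r i" "r (Suc i) \<le> k i" for i
    by (auto simp: interlaced_between_def succ_part_def)
  then show "\<forall>i. bk_lower m r i \<le> k i \<and> k i \<le> bk_upper m r i"
    by (auto simp: bk_lower_def bk_upper_def split: nat.split)
next
  assume h: "\<forall>i. bk_lower m r i \<le> k i \<and> k i \<le> bk_upper m r i"
  have "k i \<le> r i" for i
  proof -
    have "k i \<le> bk_upper m r i" using h by simp
    then show ?thesis by (cases i) (auto simp: bk_upper_def)
  qed
  moreover have "k (Suc i) \<le> m i" for i
    using h[rule_format, of "Suc i"] by (simp add: bk_upper_def)
  ultimately show "k \<in> interlaced_between m r"
    using h by (auto simp: interlaced_between_def succ_part_def bk_lower_def)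
qed

lemma sum_bk_bounds:
  "(\<Sum>i<Suc M. bk_lower m r i + bk_upper m r i) = r 0 + (\<Sum>i<M. m i + r (Suc i)) + bk_lower m r M"
proof -
  have "(\<Sum>i<Suc M. bk_upper m r i) = r 0 + (\<Sum>i<M. min (r (Suc i)) (m i))"
    by (subst sum.lessThan_Suc_shift) (simp add: bk_upper_def)
  moreover have "(\<Sum>i<M. max (m i) (r (Suc i))) + (\<Sum>i<M. min (r (Suc i)) (m i))
      = (\<Sum>i<M. m i + r (Suc i))"
    by (subst sum.distrib[symmetric]) (intro sum.cong; auto)
  ultimately show ?thesis by (simp add: sum.distrib bk_lower_def)
qed

text \<open>Bender--Knuth: reflecting each \<open>k i\<close> inside \<open>[bk_lower m r i, bk_upper m r i]\<close> is an
  involution of \<open>interlaced_between m r\<close> that exchanges \<open>|k| - |m|\<close> and \<open>|r| - |k|\<close>.\<close>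

lemma bender_knuth_symmetry:
  fixes x y :: real
  assumes fr: "finite {i. r i \<noteq> 0}"
  shows "(\<Sum>k\<in>interlaced_between m r. x ^ (psize k - psize m) * y ^ (psize r - psize k))
       = (\<Sum>k\<in>interlaced_between m r. y ^ (psize k - psize m) * x ^ (psize r - psize k))"
proof (cases "interlaced_between m r = {}")
  case False
  then obtain k0 where "k0 \<in> interlaced_between m r" by auto
  then have mr: "subpart m r"
    by (auto simp: interlaced_between_def dest!: succ_part_imp_subpart intro: subpart_trans)
  obtain M where M: "{i. r i \<noteq> 0} \<subseteq> {..<M}" using fr finite_nat_iff_bounded by blast
  then have rM: "r M = 0" "r (Suc M) = 0" by auto
  with mr have mM: "m M = 0" by (metis le_0_eq subpart_def)
  define bk where "bk k = (\<lambda>i. bk_lower m r i + bk_upper m r i - k i)" for k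
  have bounds: "bk_lower m r i \<le> k i \<and> k i \<le> bk_upper m r i" if "k \<in> interlaced_between m r" for k i
    using that by (simp add: interlaced_between_iff_bk_bounds)
  have bk_between: "bk k \<in> interlaced_between m r" if "k \<in> interlaced_between m r" for k
  proof -
    have "bk_lower m r i \<le> bk k i \<and> bk k i \<le> bk_upper m r i" for i
      unfolding bk_def using bounds[OF that, of i] by arith
    then show ?thesis by (simp add: interlaced_between_iff_bk_bounds)
  qed
  have bk_bk: "bk (bk k) = k" if "k \<in> interlaced_between m r" for k
  proof
    fix i show "bk (bk k) i = k i" unfolding bk_def using bounds[OF that, of i] by arith
  qed
  have sub_r: "subpart k r" if "k \<in> interlaced_between m r" for k
    using that by (simp add: interlaced_between_def succ_part_imp_subpart)
  have sizes: "psize (bk k) + psize k = psize r + psize m" "psize m \<le> psize k" "psize k \<le> psize r"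
    if k: "k \<in> interlaced_between m r" for k
  proof -
    have supp: "{i. p i \<noteq> 0} \<subseteq> {..<Suc M}" if "subpart p r" for p
      using subpart_support[OF that] M by auto
    have "psize (bk k) + psize k = (\<Sum>i<Suc M. bk k i + k i)"
      using psize_eq_sum_lessThan[OF supp[OF sub_r[OF bk_between[OF k]]]]
        psize_eq_sum_lessThan[OF supp[OF sub_r[OF k]]] by (simp add: sum.distrib)
    also have "\<dots> = (\<Sum>i<Suc M. bk_lower m r i + bk_upper m r i)"
    proof (intro sum.cong refl)
      fix i show "bk k i + k i = bk_lower m r i + bk_upper m r i"
        unfolding bk_def using bounds[OF k, of i] by arith
    qed
    also have "\<dots> = r 0 + (\<Sum>i<M. m i + r (Suc i)) + bk_lower m r M"
      by (rule sum_bk_bounds)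
    also have "\<dots> = (\<Sum>i<Suc M. r i) + (\<Sum>i<Suc M. m i)"
    proof -
      have "(\<Sum>i<Suc M. r i) = r 0 + (\<Sum>i<M. r (Suc i))" by (rule sum.lessThan_Suc_shift)
      moreover have "(\<Sum>i<Suc M. m i) = (\<Sum>i<M. m i)" using mM by simp
      moreover have "bk_lower m r M = 0" using rM mM by (simp add: bk_lower_def)
      ultimately show ?thesis by (simp add: sum.distrib)
    qed
    also have "\<dots> = psize r + psize m"
      using psize_eq_sum_lessThan[OF supp[OF subpart_refl]] psize_eq_sum_lessThan[OF supp[OF mr]] by simp
    finally show "psize (bk k) + psize k = psize r + psize m" .
    show "psize m \<le> psize k"
      using k by (intro psize_mono finite_support_subpart[OF sub_r[OF k] fr])
        (simp add: interlaced_between_def succ_part_imp_subpart)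
    show "psize k \<le> psize r" by (intro psize_mono[OF sub_r[OF k] fr])
  qed
  show ?thesis
  proof (rule sum.reindex_bij_witness[of _ bk bk])
    fix k assume k: "k \<in> interlaced_between m r"
    have "psize (bk k) - psize m = psize r - psize k" "psize r - psize (bk k) = psize k - psize m"
      using sizes[OF k] by auto
    then show "y ^ (psize (bk k) - psize m) * x ^ (psize r - psize (bk k))
             = x ^ (psize k - psize m) * y ^ (psize r - psize k)"
      by (simp add: mult.commute)
  qed (use bk_bk bk_between in auto)
qed simp

lemma chain_sum_Cons_Cons:
  assumes fl: "finite {i. l i \<noteq> 0}"
  shows "chain_sum m l (x # y # xs) = (\<Sum>r\<in>{r. subpart r l}.
     (\<Sum>k\<in>interlaced_between m r. x ^ (psize k - psize m) * y ^ (psize r - psize k)) * chain_sum r l xs)"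
proof -
  have "chain_sum m l (x # y # xs) = (\<Sum>k\<in>hstrips m l. \<Sum>r\<in>{r. subpart r l \<and> succ_part r k}.
          x ^ (psize k - psize m) * (y ^ (psize r - psize k) * chain_sum r l xs))"
    by (simp add: sum_distrib_left hstrips_def conj_commute)
  also have "\<dots> = (\<Sum>r\<in>{r. subpart r l}. \<Sum>k\<in>{k. k \<in> hstrips m l \<and> succ_part r k}.
          x ^ (psize k - psize m) * (y ^ (psize r - psize k) * chain_sum r l xs))"
    using sum.swap_restrict[OF finite_hstrips[OF fl] finite_subparts[OF fl]] by simp
  also have "\<dots> = (\<Sum>r\<in>{r. subpart r l}.
     (\<Sum>k\<in>interlaced_between m r. x ^ (psize k - psize m) * y ^ (psize r - psize k)) * chain_sum r l xs)"
  proof (intro sum.cong refl)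
    fix r assume "r \<in> {r. subpart r l}"
    then have "{k. k \<in> hstrips m l \<and> succ_part r k} = interlaced_between m r"
      by (auto simp: hstrips_def interlaced_between_def dest: succ_part_imp_subpart intro: subpart_trans)
    then show "(\<Sum>k\<in>{k. k \<in> hstrips m l \<and> succ_part r k}.
                 x ^ (psize k - psize m) * (y ^ (psize r - psize k) * chain_sum r l xs))
             = (\<Sum>k\<in>interlaced_between m r. x ^ (psize k - psize m) * y ^ (psize r - psize k)) * chain_sum r l xs"
      by (simp add: sum_distrib_right mult.assoc)
  qed
  finally show ?thesis .
qed

lemma chain_sum_swap:
  assumes fl: "finite {i. l i \<noteq> 0}"
  shows "chain_sum m l (x # y # xs) = chain_sum m l (y # x # xs)"
  unfolding chain_sum_Cons_Cons[OF fl]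
  using finite_support_subpart[OF _ fl] by (intro sum.cong refl) (simp add: bender_knuth_symmetry)

lemma chain_sum_snoc:
  assumes fl: "finite {i. l i \<noteq> 0}"
  shows "chain_sum m l (xs @ [x]) = chain_sum m l (x # xs)"
proof (induction xs arbitrary: m)
  case (Cons y ys)
  then have "chain_sum m l ((y # ys) @ [x]) = chain_sum m l (y # x # ys)" by simp
  also have "\<dots> = chain_sum m l (x # y # ys)" by (rule chain_sum_swap[OF fl])
  finally show ?case .
qed simp

lemma chain_sum_rev:
  assumes fl: "finite {i. l i \<noteq> 0}"
  shows "chain_sum m l (rev xs) = chain_sum m l xs"
  by (induction xs arbitrary: m) (simp_all add: chain_sum_snoc[OF fl])

section \<open>Transfer sums along paths\<close>

definition paths :: "(int \<Rightarrow> 's set) \<Rightarrow> int \<Rightarrow> int \<Rightarrow> 's \<Rightarrow> 's \<Rightarrow> (int \<Rightarrow> 's) set" where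
  "paths B a b x y = {c \<in> Pi\<^sub>E {a..b} B. c a = x \<and> c b = y}"

definition path_sum ::
    "(int \<Rightarrow> 's set) \<Rightarrow> (int \<Rightarrow> 's \<Rightarrow> 's \<Rightarrow> real) \<Rightarrow> int \<Rightarrow> int \<Rightarrow> 's \<Rightarrow> 's \<Rightarrow> real" where
  "path_sum B g a b x y = (\<Sum>c\<in>paths B a b x y. \<Prod>k\<in>{a..<b}. g k (c k) (c (k + 1)))"

lemma finite_paths: "(\<And>t. finite (B t)) \<Longrightarrow> finite (paths B a b x y)"
  unfolding paths_def by (rule finite_subset[of _ "Pi\<^sub>E {a..b} B"]) (auto intro: finite_PiE)

lemma path_sum_refl: "path_sum B g a a x y = (if x = y \<and> x \<in> B a then 1 else 0)"
proof -
  have "paths B a a x y = (if x = y \<and> x \<in> B a then {(\<lambda>t. if t = a then x else undefined)} else {})"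
    unfolding paths_def by (auto simp: PiE_def extensional_def)
  then show ?thesis by (auto simp: path_sum_def)
qed

lemma path_sum_single_step:
  "path_sum B g a (a + 1) x y = (if x \<in> B a \<and> y \<in> B (a + 1) then g a x y else 0)"
proof -
  let ?c = "\<lambda>t. if t = a then x else if t = a + 1 then y else undefined"
  have "{a..a + 1} = {a, a + 1}" by auto
  then have "paths B a (a + 1) x y = (if x \<in> B a \<and> y \<in> B (a + 1) then {?c} else {})"
    unfolding paths_def by (auto simp: PiE_def extensional_def)
  moreover have "{a..<a + 1} = {a}" by auto
  ultimately show ?thesis by (simp add: path_sum_def)
qed

definition path_join :: "int \<Rightarrow> (int \<Rightarrow> 's) \<Rightarrow> (int \<Rightarrow> 's) \<Rightarrow> int \<Rightarrow> 's" where
  "path_join m c1 c2 = (\<lambda>t. if t \<le> m then c1 t else c2 t)"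

lemma bij_betw_path_join:
  assumes am: "a \<le> m" and mb: "m \<le> b"
  shows "bij_betw (\<lambda>(c1, c2). path_join m c1 c2) (paths B a m x z \<times> paths B m b z y)
           {c \<in> paths B a b x y. c m = z}"
  unfolding bij_betw_def
proof
  show "inj_on (\<lambda>(c1, c2). path_join m c1 c2) (paths B a m x z \<times> paths B m b z y)"
  proof (rule inj_onI, clarify)
    fix c1 c2 d1 d2
    assume c: "c1 \<in> paths B a m x z" "c2 \<in> paths B m b z y"
      and d: "d1 \<in> paths B a m x z" "d2 \<in> paths B m b z y"
      and eq: "path_join m c1 c2 = path_join m d1 d2"
    have "c1 t = d1 t" for t
    proof (cases "t \<le> m")
      case True then show ?thesis using fun_cong[OF eq, of t] by (simp add: path_join_def)
    next
      case False then show ?thesis using c d by (auto simp: paths_def PiE_def extensional_def)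
    qed
    moreover have "c2 t = d2 t" for t
    proof (cases "m < t")
      case True then show ?thesis using fun_cong[OF eq, of t] by (simp add: path_join_def)
    next
      case False
      show ?thesis
      proof (cases "t = m")
        case True then show ?thesis using c d by (simp add: paths_def)
      next
        case False
        with \<open>\<not> m < t\<close> have "t \<notin> {m..b}" by auto
        then show ?thesis using c d by (auto simp: paths_def PiE_def extensional_def)
      qed
    qed
    ultimately show "c1 = d1 \<and> c2 = d2" by (simp add: fun_eq_iff)
  qed
next
  show "(\<lambda>(c1, c2). path_join m c1 c2) ` (paths B a m x z \<times> paths B m b z y)
      = {c \<in> paths B a b x y. c m = z}"
  proof
    show "(\<lambda>(c1, c2). path_join m c1 c2) ` (paths B a m x z \<times> paths B m b z y)
        \<subseteq> {c \<in> paths B a b x y. c m = z}"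
    proof clarify
      fix c1 c2 assume c1: "c1 \<in> paths B a m x z" and c2: "c2 \<in> paths B m b z y"
      have "path_join m c1 c2 \<in> Pi\<^sub>E {a..b} B"
      proof (rule PiE_I)
        fix t assume "t \<in> {a..b}"
        then show "path_join m c1 c2 t \<in> B t" using c1 c2 by (auto simp: path_join_def paths_def)
      next
        fix t assume "t \<notin> {a..b}"
        then show "path_join m c1 c2 t = undefined" using c1 c2 am mb
          by (auto simp: path_join_def paths_def PiE_def extensional_def)
      qed
      then show "path_join m c1 c2 \<in> paths B a b x y \<and> path_join m c1 c2 m = z"
        using c1 c2 am mb by (auto simp: path_join_def paths_def)
    qed
  next
    show "{c \<in> paths B a b x y. c m = z}
        \<subseteq> (\<lambda>(c1, c2). path_join m c1 c2) ` (paths B a m x z \<times> paths B m b z y)"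
    proof
      fix c assume c: "c \<in> {c \<in> paths B a b x y. c m = z}"
      let ?c1 = "\<lambda>t. if t \<in> {a..m} then c t else undefined"
      let ?c2 = "\<lambda>t. if t \<in> {m..b} then c t else undefined"
      have "?c1 \<in> paths B a m x z" "?c2 \<in> paths B m b z y"
        using c am mb by (auto simp: paths_def)
      moreover have "path_join m ?c1 ?c2 = c"
        using c am mb by (auto simp: path_join_def paths_def PiE_def extensional_def fun_eq_iff)
      ultimately show "c \<in> (\<lambda>(c1, c2). path_join m c1 c2) ` (paths B a m x z \<times> paths B m b z y)"
        by (intro image_eqI[where x = "(?c1, ?c2)"]) auto
    qed
  qed
qed

lemma path_sum_split:
  assumes fin: "\<And>t. finite (B t)" and "a \<le> m" "m \<le> b"
  shows "path_sum B g a b x y = (\<Sum>z\<in>B m. path_sum B g a m x z * path_sum B g m b z y)"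
proof -
  let ?w = "\<lambda>a b c. \<Prod>k\<in>{a..<b}. g k (c k) (c (k + 1))"
  define P where "P z = {c \<in> paths B a b x y. c m = z}" for z
  have U: "paths B a b x y = (\<Union>z\<in>B m. P z)"
    using assms by (auto simp: P_def paths_def PiE_iff)
  have "path_sum B g a b x y = (\<Sum>z\<in>B m. \<Sum>c\<in>P z. ?w a b c)"
    unfolding path_sum_def U
    by (rule sum.UNION_disjoint) (auto simp: fin P_def intro: finite_subset[OF _ finite_paths[OF fin]])
  also have "\<dots> = (\<Sum>z\<in>B m. path_sum B g a m x z * path_sum B g m b z y)"
  proof (intro sum.cong refl)
    fix z
    have w_split: "?w a b (path_join m c1 c2) = ?w a m c1 * ?w m b c2"
      if "c1 \<in> paths B a m x z" "c2 \<in> paths B m b z y" for c1 c2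
    proof -
      have "{a..<b} = {a..<m} \<union> {m..<b}" using assms by auto
      then have "?w a b (path_join m c1 c2) = ?w a m (path_join m c1 c2) * ?w m b (path_join m c1 c2)"
        by (simp add: prod.union_disjoint ivl_disj_int_two(3))
      moreover have "?w a m (path_join m c1 c2) = ?w a m c1"
        by (intro prod.cong refl) (auto simp: path_join_def)
      moreover have "?w m b (path_join m c1 c2) = ?w m b c2"
        using that by (intro prod.cong refl) (auto simp: path_join_def paths_def)
      ultimately show ?thesis by simp
    qed
    have "(\<Sum>c\<in>P z. ?w a b c)
        = (\<Sum>(c1, c2)\<in>paths B a m x z \<times> paths B m b z y. ?w a b (path_join m c1 c2))"
      using sum.reindex_bij_betw[OF bij_betw_path_join[OF assms(2,3)], of "?w a b"]
      by (simp add: split_def P_def)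
    also have "\<dots> = (\<Sum>(c1, c2)\<in>paths B a m x z \<times> paths B m b z y. ?w a m c1 * ?w m b c2)"
      by (intro sum.cong refl) (auto simp: w_split)
    also have "\<dots> = path_sum B g a m x z * path_sum B g m b z y"
      unfolding path_sum_def sum_product sum.cartesian_product by (simp add: split_def)
    finally show "(\<Sum>c\<in>P z. ?w a b c)
        = path_sum B g a m x z * path_sum B g m b z y" .
  qed
  finally show ?thesis .
qed

lemma path_sum_reflect:
  assumes "a \<le> b"
  shows "path_sum B g a b x y = path_sum (\<lambda>t. B (a + b - t)) (\<lambda>k x y. g (a + b - 1 - k) y x) a b y x"
proof -
  define \<rho> where "\<rho> c = (\<lambda>t. if t \<in> {a..b} then c (a + b - t) else undefined)" for c :: "int \<Rightarrow> 'a"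
  show ?thesis
    unfolding path_sum_def
  proof (rule sum.reindex_bij_witness[of _ \<rho> \<rho>])
    fix c assume c: "c \<in> paths B a b x y"
    show "\<rho> (\<rho> c) = c" "\<rho> c \<in> paths (\<lambda>t. B (a + b - t)) a b y x"
      using c assms by (auto simp: \<rho>_def paths_def PiE_def extensional_def fun_eq_iff)
    show "(\<Prod>k\<in>{a..<b}. g (a + b - 1 - k) (\<rho> c (k + 1)) (\<rho> c k))
        = (\<Prod>k\<in>{a..<b}. g k (c k) (c (k + 1)))"
      by (rule prod.reindex_bij_witness[of _ "\<lambda>k. a + b - 1 - k" "\<lambda>k. a + b - 1 - k"])
        (auto simp: \<rho>_def algebra_simps)
  next
    fix c assume c: "c \<in> paths (\<lambda>t. B (a + b - t)) a b y x"
    have "c (a + b - t) \<in> B t" if "t \<in> {a..b}" for t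
      using c that PiE_mem[of c "{a..b}" "\<lambda>t. B (a + b - t)" "a + b - t"] by (auto simp: paths_def)
    then show "\<rho> (\<rho> c) = c" "\<rho> c \<in> paths B a b x y"
      using c assms by (auto simp: \<rho>_def paths_def PiE_def extensional_def fun_eq_iff)
  qed
qed

lemma path_sum_growing:
  assumes fin: "\<And>t. finite (B t)" and ab: "a \<le> b"
    and g: "\<And>k x y. a \<le> k \<Longrightarrow> k < b \<Longrightarrow>
              g k x y = (if succ_part y x then w k ^ (psize y - psize x) else 0)"
    and interior: "\<And>t z. a < t \<Longrightarrow> t < b \<Longrightarrow> z \<in> partitions \<Longrightarrow> subpart z y \<Longrightarrow> z \<in> B t"
    and x: "x \<in> B a" and y: "y \<in> B b" "y \<in> partitions"
  shows "path_sum B g a b x y = chain_sum x y (map w [a..b - 1])"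
proof -
  have fy: "finite {i. y i \<noteq> 0}" using y(2) by (rule partition_support_finite)
  obtain n where "b = a + int n" using ab zle_iff_zadd by auto
  with g interior x show ?thesis
  proof (induction n arbitrary: a x)
    case 0
    then show ?case using y by (simp add: path_sum_refl)
  next
    case (Suc n)
    let ?ws = "map w [a + 1..b - 1]"
    have b: "b = (a + 1) + int n" using Suc.prems by simp
    have IH: "path_sum B g (a + 1) b z y = chain_sum z y ?ws" if "z \<in> B (a + 1)" for z
      by (rule Suc.IH) (use Suc.prems b that in auto)
    have "path_sum B g a b x y = (\<Sum>z\<in>B (a + 1). path_sum B g a (a + 1) x z * path_sum B g (a + 1) b z y)"
      using b by (intro path_sum_split fin) auto
    also have "\<dots> = (\<Sum>z\<in>B (a + 1). g a x z * chain_sum z y ?ws)"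
      using Suc.prems(3) by (intro sum.cong refl) (simp add: path_sum_single_step IH)
    also have "\<dots> = (\<Sum>z\<in>hstrips x y. w a ^ (psize z - psize x) * chain_sum z y ?ws)"
    proof (rule sum.mono_neutral_cong[OF finite_hstrips[OF fy] fin])
      fix z assume z: "z \<in> hstrips x y - B (a + 1)"
      have "z \<in> partitions" using z fy by (auto simp: hstrips_def intro: succ_part_in_partitions)
      then have "a + 1 = b" using z Suc.prems(2)[of "a + 1" z] b by (force simp: hstrips_def)
      then have "?ws = []" "z \<noteq> y" using z y(1) by auto
      then show "w a ^ (psize z - psize x) * chain_sum z y ?ws = 0" by simp
    next
      fix z assume "z \<in> B (a + 1) - hstrips x y"
      then show "g a x z * chain_sum z y ?ws = 0"
        using Suc.prems(1)[of a] b chain_sum_nonzero_imp_subpart[of z y ?ws] by (auto simp: hstrips_def)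
    next
      fix z assume "z \<in> B (a + 1) \<inter> hstrips x y"
      then show "g a x z * chain_sum z y ?ws = w a ^ (psize z - psize x) * chain_sum z y ?ws"
        using Suc.prems(1)[of a] b by (simp add: hstrips_def)
    qed
    also have "\<dots> = chain_sum x y (map w [a..b - 1])"
      using b by (simp add: upto_rec1)
    finally show ?case .
  qed
qed

lemma map_upto_reflect: "map (\<lambda>k. w (a + b - 1 - k)) [a..b - 1] = rev (map w [a..b - 1])"
proof (rule nth_equalityI)
  fix i assume "i < length (map (\<lambda>k. w (a + b - 1 - k)) [a..b - 1])"
  then have i: "i < nat (b - a)" by simp
  have "map (\<lambda>k. w (a + b - 1 - k)) [a..b - 1] ! i = w (a + b - 1 - (a + int i))"
    using i by simp
  also have "\<dots> = w ([a..b - 1] ! (nat (b - a) - Suc i))"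
    using i by (subst nth_upto) (auto simp: algebra_simps)
  also have "\<dots> = rev (map w [a..b - 1]) ! i"
    using i by (simp add: rev_nth)
  finally show "map (\<lambda>k. w (a + b - 1 - k)) [a..b - 1] ! i = rev (map w [a..b - 1]) ! i" .
qed simp

lemma path_sum_shrinking:
  assumes fin: "\<And>t. finite (B t)" and ab: "a \<le> b"
    and g: "\<And>k x y. a \<le> k \<Longrightarrow> k < b \<Longrightarrow>
              g k x y = (if succ_part x y then w k ^ (psize x - psize y) else 0)"
    and interior: "\<And>t z. a < t \<Longrightarrow> t < b \<Longrightarrow> z \<in> partitions \<Longrightarrow> subpart z x \<Longrightarrow> z \<in> B t"
    and x: "x \<in> B a" "x \<in> partitions" and y: "y \<in> B b"
  shows "path_sum B g a b x y = chain_sum y x (rev (map w [a..b - 1]))"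
proof -
  have "path_sum B g a b x y
      = path_sum (\<lambda>t. B (a + b - t)) (\<lambda>k x y. g (a + b - 1 - k) y x) a b y x"
    using ab by (rule path_sum_reflect)
  also have "\<dots> = chain_sum y x (map (\<lambda>k. w (a + b - 1 - k)) [a..b - 1])"
    by (rule path_sum_growing) (use assms in auto)
  finally show ?thesis by (simp add: map_upto_reflect)
qed

lemma prod_telescoping_powers:
  fixes p :: "int \<Rightarrow> 'a :: field" and f :: "int \<Rightarrow> nat"
  assumes "f a = 0" "f b = 0"
  shows "(\<Prod>k\<in>{a..<b}. p k ^ f k / p k ^ f (k + 1)) = (\<Prod>t\<in>{a<..<b}. (p t / p (t - 1)) ^ f t)"
proof -
  have "(\<Prod>k\<in>{a..<b}. p k ^ f k) = (\<Prod>t\<in>{a<..<b}. p t ^ f t)"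
    using assms(1) by (intro prod.mono_neutral_right) auto
  moreover have "(\<Prod>k\<in>{a..<b}. p k ^ f (k + 1)) = (\<Prod>t\<in>{a<..b}. p (t - 1) ^ f t)"
    by (rule prod.reindex_bij_witness[of _ "\<lambda>t. t - 1" "\<lambda>k. k + 1"]) auto
  moreover have "(\<Prod>t\<in>{a<..b}. p (t - 1) ^ f t) = (\<Prod>t\<in>{a<..<b}. p (t - 1) ^ f t)"
    using assms(2) by (intro prod.mono_neutral_right) auto
  ultimately show ?thesis by (simp add: prod_dividef power_divide)
qed

lemma int_chain_rel:
  fixes a b :: int
  assumes "reflp R" "transp R" "a \<le> b" and step: "\<And>k. a \<le> k \<Longrightarrow> k < b \<Longrightarrow> R (f k) (f (k + 1))"
  shows "R (f a) (f b)"
  using \<open>a \<le> b\<close> step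
proof (induction b rule: int_ge_induct)
  case base
  show ?case using \<open>reflp R\<close> by (rule reflpD)
next
  case (step i)
  then have "R (f a) (f i)" "R (f i) (f (i + 1))" by auto
  with \<open>transp R\<close> show ?case by (rule transpD)
qed

section \<open>Configurations with pinned slices\<close>

locale pinned_slices =
  fixes N :: nat and u v :: "nat \<Rightarrow> int" and q :: "int \<Rightarrow> real" and lam :: "nat \<Rightarrow> nat \<Rightarrow> nat"
  assumes N_pos: "N \<ge> 1"
    and corners: "\<And>i. 1 \<le> i \<Longrightarrow> i \<le> N \<Longrightarrow> u (i - 1) < v i \<and> v i < u i"
    and q_nonzero: "\<And>t. u 0 < t \<Longrightarrow> t < u N \<Longrightarrow> q t \<noteq> 0"
    and lam_partitions: "\<And>i. 1 \<le> i \<Longrightarrow> i \<le> N \<Longrightarrow> lam i \<in> partitions"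
begin

lemma u_strict_mono: "j < i \<Longrightarrow> i \<le> N \<Longrightarrow> u j < u i"
proof (induction i)
  case (Suc i)
  have "u i < u (Suc i)" using corners[of "Suc i"] Suc.prems by fastforce
  with Suc show ?case by (cases "j = i") auto
qed simp

lemma u_mono: "j \<le> i \<Longrightarrow> i \<le> N \<Longrightarrow> u j \<le> u i"
  using u_strict_mono[of j i] by (cases "j = i") auto

lemma v_less_u: "1 \<le> j \<Longrightarrow> j \<le> i \<Longrightarrow> i \<le> N \<Longrightarrow> v j < u i"
  using corners[of j] u_mono[of j i] by auto

lemma u_less_v:
  assumes "i < j" "j \<le> N"
  shows "u i < v j"
proof -
  have "u i \<le> u (j - 1)" using assms by (intro u_mono) auto
  also have "\<dots> < v j" using corners[of j] assms by auto
  finally show ?thesis .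
qed

lemma v_strict_mono: "1 \<le> j \<Longrightarrow> j < i \<Longrightarrow> i \<le> N \<Longrightarrow> v j < v i"
  using v_less_u[of j j] u_less_v[of j i] by auto

lemma u0_less_uN: "u 0 < u N"
  using u_strict_mono[of 0 N] N_pos by simp

lemma segment_containing:
  assumes "u 0 \<le> t" "t < u N"
  obtains i where "i \<in> {1..N}" "u (i - 1) \<le> t" "t < u i"
proof -
  define i where "i = (LEAST i. t < u i)"
  have i: "t < u i" "i \<le> N"
    unfolding i_def using assms by (auto intro: LeastI[of _ N] Least_le)
  have "i \<noteq> 0"
  proof
    assume "i = 0"
    with i assms show False by simp
  qed
  moreover have "\<not> t < u (i - 1)"
    using not_less_Least[of "i - 1" "\<lambda>i. t < u i"] \<open>i \<noteq> 0\<close> unfolding i_def by auto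
  ultimately show ?thesis using i by (intro that[of i]) (auto simp: not_less)
qed

lemma in_DminusI: "i \<in> {1..N} \<Longrightarrow> u (i - 1) \<le> k \<Longrightarrow> k < v i \<Longrightarrow> in_Dminus N u v k"
  unfolding in_Dminus_def by (intro bexI[of _ i]) auto

lemma in_DplusI: "i \<in> {1..N} \<Longrightarrow> v i \<le> k \<Longrightarrow> k < u i \<Longrightarrow> in_Dplus N u v k"
  unfolding in_Dplus_def by (intro bexI[of _ i]) auto

lemma not_in_Dminus:
  assumes i: "i \<in> {1..N}" and k: "v i \<le> k" "k < u i"
  shows "\<not> in_Dminus N u v k"
proof
  assume "in_Dminus N u v k"
  then obtain j where j: "j \<in> {1..N}" "u (j - 1) \<le> k" "k + 1 \<le> v j"
    unfolding in_Dminus_def by auto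
  show False
  proof (cases "j \<le> i")
    case True
    then have "v j \<le> v i" using v_strict_mono[of j i] i j by (cases "j = i") auto
    then show False using j k by auto
  next
    case False
    then have "u i \<le> u (j - 1)" using u_mono[of i "j - 1"] j by auto
    then show False using j k by auto
  qed
qed

lemma in_Dplus_imp_not_in_Dminus: "in_Dplus N u v k \<Longrightarrow> \<not> in_Dminus N u v k"
  unfolding in_Dplus_def using not_in_Dminus by auto

lemma in_Dminus_or_in_Dplus:
  assumes "u 0 \<le> k" "k < u N"
  shows "in_Dminus N u v k \<or> in_Dplus N u v k"
proof -
  obtain i where "i \<in> {1..N}" "u (i - 1) \<le> k" "k < u i"
    using assms by (rule segment_containing)
  then show ?thesis by (cases "k < v i") (auto intro: in_DminusI in_DplusI)
qed

definition lam_bound :: "nat \<Rightarrow> nat" where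
  "lam_bound j = (\<Sum>i\<in>{1..N}. lam i j)"

definition allowed_slices :: "int \<Rightarrow> (nat \<Rightarrow> nat) set" where
  "allowed_slices t = {k \<in> partitions. subpart k lam_bound \<and> (\<forall>i\<in>{1..N}. t = v i \<longrightarrow> k = lam i)}"

definition step_weight :: "int \<Rightarrow> (nat \<Rightarrow> nat) \<Rightarrow> (nat \<Rightarrow> nat) \<Rightarrow> real" where
  "step_weight k x y = (if in_Dminus N u v k
     then (if succ_part y x then xminus u q k ^ (psize y - psize x) else 0)
     else (if succ_part x y then xplus u q k ^ (psize x - psize y) else 0))"

abbreviation slice_sum :: "int \<Rightarrow> int \<Rightarrow> (nat \<Rightarrow> nat) \<Rightarrow> (nat \<Rightarrow> nat) \<Rightarrow> real" where
  "slice_sum \<equiv> path_sum allowed_slices step_weight"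

definition gluing_term :: "nat \<Rightarrow> (nat \<Rightarrow> nat) \<Rightarrow> real" where
  "gluing_term i \<nu> = skew_schur (lam i) \<nu> (Xplus u v q i) * skew_schur (lam (i + 1)) \<nu> (Xminus u v q (i + 1))"

lemma lam_subpart_lam_bound: "i \<in> {1..N} \<Longrightarrow> subpart (lam i) lam_bound"
  unfolding subpart_def lam_bound_def by (auto intro!: member_le_sum)

lemma finite_allowed_slices: "finite (allowed_slices t)"
proof -
  have "{j. lam_bound j \<noteq> 0} \<subseteq> (\<Union>i\<in>{1..N}. {j. lam i j \<noteq> 0})"
    by (auto simp: lam_bound_def)
  then have "finite {j. lam_bound j \<noteq> 0}"
    by (rule finite_subset) (use lam_partitions in \<open>auto simp: partitions_def\<close>)
  then have "finite {k. subpart k lam_bound}" by (rule finite_subparts)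
  moreover have "allowed_slices t \<subseteq> {k. subpart k lam_bound}" by (auto simp: allowed_slices_def)
  ultimately show ?thesis using finite_subset by blast
qed

lemma allowed_slices_free:
  "(\<And>i. i \<in> {1..N} \<Longrightarrow> t \<noteq> v i) \<Longrightarrow> allowed_slices t = {k \<in> partitions. subpart k lam_bound}"
  by (auto simp: allowed_slices_def)

lemma allowed_slices_v: "i \<in> {1..N} \<Longrightarrow> allowed_slices (v i) = {lam i}"
proof -
  assume i: "i \<in> {1..N}"
  have "j = i" if "j \<in> {1..N}" "v i = v j" for j
    using that i v_strict_mono[of i j] v_strict_mono[of j i] by (cases "i < j"; cases "j < i") auto
  then show ?thesis
    using i lam_partitions lam_subpart_lam_bound by (auto simp: allowed_slices_def)
qed

lemma allowed_slices_u: "j \<le> N \<Longrightarrow> allowed_slices (u j) = {k \<in> partitions. subpart k lam_bound}"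
proof (rule allowed_slices_free)
  fix i assume "j \<le> N" "i \<in> {1..N}"
  then show "u j \<noteq> v i" using v_less_u[of i j] u_less_v[of j i] by (cases "i \<le> j") auto
qed

lemma empty_part_in_allowed_slices_u: "j \<le> N \<Longrightarrow> empty_part \<in> allowed_slices (u j)"
  using empty_part_in_partitions by (simp add: allowed_slices_u subpart_def empty_part_def)

lemma xplus_nonzero: "k < u N \<Longrightarrow> xplus u q k \<noteq> 0"
  unfolding xplus_def using q_nonzero by simp

lemma slice_sum_up_to_v:
  assumes i: "i \<in> {1..N}" and x: "x \<in> allowed_slices (u (i - 1))"
  shows "slice_sum (u (i - 1)) (v i) x (lam i) = skew_schur (lam i) x (Xminus u v q i)"
proof -
  have "slice_sum (u (i - 1)) (v i) x (lam i)
      = chain_sum x (lam i) (map (xminus u q) [u (i - 1)..v i - 1])"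
  proof (rule path_sum_growing[OF finite_allowed_slices])
    show "u (i - 1) \<le> v i" using corners[of i] i by auto
    show "step_weight k x y = (if succ_part y x then xminus u q k ^ (psize y - psize x) else 0)"
      if "u (i - 1) \<le> k" "k < v i" for k x y
      using that in_DminusI[OF i] by (simp add: step_weight_def)
    show "z \<in> allowed_slices t" if t: "u (i - 1) < t" "t < v i" and z: "z \<in> partitions" "subpart z (lam i)" for t z
    proof -
      have "t \<noteq> v j" if j: "j \<in> {1..N}" for j
      proof (cases "j < i")
        case True
        then have "v j < u (i - 1)" using i j by (intro v_less_u) auto
        then show ?thesis using t by auto
      next
        case False
        then show ?thesis using v_strict_mono[of i j] i j t by (cases "i = j") auto
      qed
      then show ?thesis
        using allowed_slices_free z lam_subpart_lam_bound[OF i] subpart_trans by auto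
    qed
    show "x \<in> allowed_slices (u (i - 1))" by (rule x)
    show "lam i \<in> allowed_slices (v i)" using allowed_slices_v[OF i] by simp
    show "lam i \<in> partitions" using lam_partitions i by simp
  qed
  also have "\<dots> = skew_schur (lam i) x (Xminus u v q i)"
    using x i lam_partitions by (simp add: skew_schur_eq_chain_sum Xminus_def allowed_slices_def)
  finally show ?thesis .
qed

lemma slice_sum_down_from_v:
  assumes i: "i \<in> {1..N}" and y: "y \<in> allowed_slices (u i)"
  shows "slice_sum (v i) (u i) (lam i) y = skew_schur (lam i) y (Xplus u v q i)"
proof -
  have lam: "lam i \<in> partitions" using lam_partitions i by simp
  have "slice_sum (v i) (u i) (lam i) y
      = chain_sum y (lam i) (rev (map (xplus u q) [v i..u i - 1]))"
  proof (rule path_sum_shrinking[OF finite_allowed_slices])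
    show "v i \<le> u i" using corners[of i] i by auto
    show "step_weight k x y = (if succ_part x y then xplus u q k ^ (psize x - psize y) else 0)"
      if "v i \<le> k" "k < u i" for k x y
      using that not_in_Dminus[OF i] by (simp add: step_weight_def)
    show "z \<in> allowed_slices t" if t: "v i < t" "t < u i" and z: "z \<in> partitions" "subpart z (lam i)" for t z
    proof -
      have "t \<noteq> v j" if j: "j \<in> {1..N}" for j
      proof (cases "j \<le> i")
        case True
        then show ?thesis using v_strict_mono[of j i] i j t by (cases "i = j") auto
      next
        case False
        then show ?thesis using u_less_v[of i j] j t by auto
      qed
      then show ?thesis
        using allowed_slices_free z lam_subpart_lam_bound[OF i] subpart_trans by auto
    qed
    show "lam i \<in> allowed_slices (v i)" using allowed_slices_v[OF i] by simp
    show "lam i \<in> partitions" by (rule lam)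
    show "y \<in> allowed_slices (u i)" by (rule y)
  qed
  also have "\<dots> = skew_schur (lam i) y (Xplus u v q i)"
    using y lam by (simp add: chain_sum_rev[OF partition_support_finite[OF lam]]
        skew_schur_eq_chain_sum Xplus_def allowed_slices_def)
  finally show ?thesis .
qed

lemma slice_sum_block:
  assumes i: "i \<in> {1..N}" and z: "z \<in> allowed_slices (u (i - 1))" and y: "y \<in> allowed_slices (u i)"
  shows "slice_sum (u (i - 1)) (u i) z y
       = skew_schur (lam i) z (Xminus u v q i) * skew_schur (lam i) y (Xplus u v q i)"
proof -
  have "slice_sum (u (i - 1)) (u i) z y = (\<Sum>w\<in>allowed_slices (v i).
      slice_sum (u (i - 1)) (v i) z w * slice_sum (v i) (u i) w y)"
    using corners[of i] i by (intro path_sum_split finite_allowed_slices) auto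
  also have "\<dots> = slice_sum (u (i - 1)) (v i) z (lam i)
                  * slice_sum (v i) (u i) (lam i) y"
    by (simp add: allowed_slices_v[OF i])
  finally show ?thesis
    unfolding slice_sum_up_to_v[OF i z] slice_sum_down_from_v[OF i y] .
qed

lemma infsum_gluing_term:
  assumes i: "i \<in> {1..<N}"
  shows "(\<Sum>\<^sub>\<infinity>\<nu>\<in>partitions. gluing_term i \<nu>) = (\<Sum>\<nu>\<in>allowed_slices (u i). gluing_term i \<nu>)"
proof -
  have "(\<Sum>\<^sub>\<infinity>\<nu>\<in>partitions. gluing_term i \<nu>) = (\<Sum>\<^sub>\<infinity>\<nu>\<in>allowed_slices (u i). gluing_term i \<nu>)"
  proof (rule infsum_cong_neutral)
    fix \<nu> assume "\<nu> \<in> partitions - allowed_slices (u i)"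
    then have "\<not> subpart \<nu> (lam i)"
      using i lam_subpart_lam_bound[of i] subpart_trans allowed_slices_u[of i] by auto
    then show "gluing_term i \<nu> = 0" by (simp add: gluing_term_def skew_schur_def)
  qed (use i allowed_slices_u[of i] in auto)
  then show ?thesis using finite_allowed_slices by simp
qed

lemma slice_sum_prefix:
  assumes "1 \<le> j" "j \<le> N" "y \<in> allowed_slices (u j)"
  shows "slice_sum (u 0) (u j) empty_part y = schur (lam 1) (Xminus u v q 1)
           * (\<Prod>i\<in>{1..<j}. \<Sum>\<^sub>\<infinity>\<nu>\<in>partitions. gluing_term i \<nu>) * skew_schur (lam j) y (Xplus u v q j)"
  using assms
proof (induction j arbitrary: y rule: nat_induct_at_least)
  case base
  then show ?case
    using slice_sum_block[of 1 empty_part y] empty_part_in_allowed_slices_u[of 0] by (simp add: schur_def)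
next
  case (Suc j)
  let ?S = "schur (lam 1) (Xminus u v q 1)"
  let ?P = "\<lambda>j. \<Prod>i\<in>{1..<j}. \<Sum>\<^sub>\<infinity>\<nu>\<in>partitions. gluing_term i \<nu>"
  let ?T = "skew_schur (lam (Suc j)) y (Xplus u v q (Suc j))"
  have "slice_sum (u 0) (u (Suc j)) empty_part y
      = (\<Sum>z\<in>allowed_slices (u j). slice_sum (u 0) (u j) empty_part z * slice_sum (u j) (u (Suc j)) z y)"
    using Suc.prems by (intro path_sum_split finite_allowed_slices u_mono) auto
  also have "\<dots> = (\<Sum>z\<in>allowed_slices (u j). ?S * ?P j * gluing_term j z * ?T)"
    using Suc slice_sum_block[of "Suc j" _ y] by (intro sum.cong refl) (auto simp: gluing_term_def)
  also have "\<dots> = ?S * (?P j * (\<Sum>z\<in>allowed_slices (u j). gluing_term j z)) * ?T"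
    by (simp add: sum_distrib_left sum_distrib_right mult_ac)
  also have "?P j * (\<Sum>z\<in>allowed_slices (u j). gluing_term j z) = ?P (Suc j)"
    using Suc infsum_gluing_term[of j] by (simp add: prod.atLeastLessThan_Suc)
  finally show ?case .
qed

lemma q_eq_xplus_ratio:
  assumes "u 0 < t" "t < u N"
  shows "q t = xplus u q t / xplus u q (t - 1)"
proof -
  have "{u 0<..t} = insert t {u 0<..t - 1}" using assms by auto
  then have "xplus u q t = q t * xplus u q (t - 1)" by (simp add: xplus_def)
  moreover have "xplus u q (t - 1) \<noteq> 0" using assms by (intro xplus_nonzero) auto
  ultimately show ?thesis by simp
qed

lemma configsD:
  assumes "L \<in> configs N u v"
  shows "\<And>t. L t \<in> partitions"
    and "\<And>t. t \<le> u 0 \<or> u N \<le> t \<Longrightarrow> L t = empty_part"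
    and "\<And>k. u 0 \<le> k \<Longrightarrow> k < u N \<Longrightarrow> in_Dminus N u v k \<Longrightarrow> succ_part (L (k + 1)) (L k)"
    and "\<And>k. u 0 \<le> k \<Longrightarrow> k < u N \<Longrightarrow> in_Dplus N u v k \<Longrightarrow> succ_part (L k) (L (k + 1))"
  using assms unfolding configs_def by auto

lemma step_weight_config:
  assumes L: "L \<in> configs N u v" and k: "u 0 \<le> k" "k < u N"
  shows "step_weight k (L k) (L (k + 1)) = xplus u q k ^ psize (L k) / xplus u q k ^ psize (L (k + 1))"
proof -
  have xp: "xplus u q k \<noteq> 0" using k by (intro xplus_nonzero)
  have fin: "finite {i. L t i \<noteq> 0}" for t using configsD(1)[OF L] by (rule partition_support_finite)
  show ?thesis
  proof (cases "in_Dminus N u v k")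
    case True
    then have "succ_part (L (k + 1)) (L k)" using configsD(3)[OF L] k by blast
    moreover from this have "psize (L k) \<le> psize (L (k + 1))"
      by (intro psize_mono succ_part_imp_subpart fin)
    ultimately show ?thesis
      using True xp by (simp add: step_weight_def xminus_def power_diff field_simps)
  next
    case False
    then have "succ_part (L k) (L (k + 1))"
      using configsD(4)[OF L] k in_Dminus_or_in_Dplus by blast
    moreover from this have "psize (L (k + 1)) \<le> psize (L k)"
      by (intro psize_mono succ_part_imp_subpart fin)
    ultimately show ?thesis
      using False xp by (simp add: step_weight_def power_diff)
  qed
qed

lemma weight_eq_prod_step_weight:
  assumes L: "L \<in> configs N u v"
  shows "weight N u q L = (\<Prod>k\<in>{u 0..<u N}. step_weight k (L k) (L (k + 1)))"
proof -
  have ends: "psize (L (u 0)) = 0" "psize (L (u N)) = 0"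
    using configsD(2)[OF L] by simp_all
  have "weight N u q L = (\<Prod>t\<in>{u 0<..<u N}. (xplus u q t / xplus u q (t - 1)) ^ psize (L t))"
    unfolding weight_def by (intro prod.cong refl) (simp add: q_eq_xplus_ratio)
  also have "\<dots> = (\<Prod>k\<in>{u 0..<u N}. xplus u q k ^ psize (L k) / xplus u q k ^ psize (L (k + 1)))"
    using ends by (rule prod_telescoping_powers[symmetric])
  also have "\<dots> = (\<Prod>k\<in>{u 0..<u N}. step_weight k (L k) (L (k + 1)))"
    using L by (intro prod.cong refl) (simp add: step_weight_config)
  finally show ?thesis .
qed

definition pinned_configs :: "(int \<Rightarrow> nat \<Rightarrow> nat) set" where
  "pinned_configs = {L \<in> configs N u v. \<forall>i\<in>{1..N}. L (v i) = lam i}"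

lemma pinned_slice_in_allowed_slices:
  assumes L: "L \<in> pinned_configs" and t: "u 0 \<le> t" "t \<le> u N"
  shows "L t \<in> allowed_slices t"
proof -
  have Lc: "L \<in> configs N u v" and pin: "\<And>i. i \<in> {1..N} \<Longrightarrow> L (v i) = lam i"
    using L by (auto simp: pinned_configs_def)
  obtain i where i: "i \<in> {1..N}" "u (i - 1) \<le> t" "t \<le> u i"
  proof (cases "t < u N")
    case True
    with t(1) obtain j where "j \<in> {1..N}" "u (j - 1) \<le> t" "t < u j"
      by (rule segment_containing)
    then show ?thesis by (intro that[of j]) auto
  next
    case False
    then show ?thesis using t N_pos u_mono[of "N - 1" N] that[of N] by auto
  qed
  have seg: "u 0 \<le> u (i - 1)" "u i \<le> u N" using i by (auto intro: u_mono)
  have "subpart (L t) (L (v i))"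
  proof (cases "t \<le> v i")
    case True
    show ?thesis
    proof (rule int_chain_rel[where R = subpart])
      fix k assume "t \<le> k" "k < v i"
      then show "subpart (L k) (L (k + 1))"
        using configsD(3)[OF Lc, of k] in_DminusI[OF i(1), of k] i seg corners[of i]
        by (auto intro: succ_part_imp_subpart)
    qed (use True in \<open>auto simp: reflp_def transp_def intro: subpart_trans\<close>)
  next
    case False
    show ?thesis
    proof (rule int_chain_rel[where R = "\<lambda>x y. subpart y x"])
      fix k assume "v i \<le> k" "k < t"
      then show "subpart (L (k + 1)) (L k)"
        using configsD(4)[OF Lc, of k] in_DplusI[OF i(1), of k] i seg corners[of i]
        by (auto intro: succ_part_imp_subpart)
    qed (use False in \<open>auto simp: reflp_def transp_def intro: subpart_trans\<close>)
  qed
  then have "subpart (L t) lam_bound"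
    using pin[OF i(1)] lam_subpart_lam_bound[OF i(1)] subpart_trans by metis
  then show ?thesis
    using configsD(1)[OF Lc] pin by (auto simp: allowed_slices_def)
qed

lemma restrict_pinned_in_paths:
  "L \<in> pinned_configs \<Longrightarrow> restrict L {u 0..u N} \<in> paths allowed_slices (u 0) (u N) empty_part empty_part"
  using pinned_slice_in_allowed_slices configsD(2)[of L] u0_less_uN by (auto simp: paths_def pinned_configs_def)

lemma inj_on_restrict_pinned: "inj_on (\<lambda>L. restrict L {u 0..u N}) pinned_configs"
proof (rule inj_onI)
  fix L1 L2 assume L: "L1 \<in> pinned_configs" "L2 \<in> pinned_configs"
    and eq: "restrict L1 {u 0..u N} = restrict L2 {u 0..u N}"
  show "L1 = L2"
  proof
    fix t show "L1 t = L2 t"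
    proof (cases "t \<in> {u 0..u N}")
      case True then show ?thesis using fun_cong[OF eq, of t] by simp
    next
      case False
      then show ?thesis using L configsD(2)[of L1 t] configsD(2)[of L2 t] by (auto simp: pinned_configs_def)
    qed
  qed
qed

lemma path_extends_to_pinned:
  assumes c: "c \<in> paths allowed_slices (u 0) (u N) empty_part empty_part"
    and nonzero: "(\<Prod>k\<in>{u 0..<u N}. step_weight k (c k) (c (k + 1))) \<noteq> 0"
  shows "c \<in> (\<lambda>L. restrict L {u 0..u N}) ` pinned_configs"
proof -
  have step: "step_weight k (c k) (c (k + 1)) \<noteq> 0" if "u 0 \<le> k" "k < u N" for k
    using nonzero that by auto
  have cP: "c \<in> Pi\<^sub>E {u 0..u N} allowed_slices" "c (u 0) = empty_part" "c (u N) = empty_part"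
    using c by (auto simp: paths_def)
  define L where "L t = (if t \<in> {u 0..u N} then c t else empty_part)" for t
  have "L \<in> configs N u v"
    unfolding configs_def
  proof (intro CollectI conjI allI impI)
    fix t show "L t \<in> partitions"
      using cP(1) empty_part_in_partitions by (auto simp: L_def allowed_slices_def PiE_iff)
  next
    fix t assume "t \<le> u 0 \<or> u N \<le> t"
    then show "L t = empty_part" using cP by (auto simp: L_def)
  next
    fix k assume "u 0 \<le> k \<and> k + 1 \<le> u N" "in_Dminus N u v k"
    then show "succ_part (L (k + 1)) (L k)"
      using step[of k] by (auto simp: step_weight_def L_def split: if_splits)
  next
    fix k assume "u 0 \<le> k \<and> k + 1 \<le> u N" "in_Dplus N u v k"
    then show "succ_part (L k) (L (k + 1))"
      using step[of k] in_Dplus_imp_not_in_Dminus by (auto simp: step_weight_def L_def split: if_splits)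
  qed
  moreover have "L (v i) = lam i" if i: "i \<in> {1..N}" for i
  proof -
    have "u 0 \<le> u (i - 1)" "u i \<le> u N" using i by (auto intro: u_mono)
    then have "u 0 \<le> v i" "v i \<le> u N" using i corners[of i] by auto
    then show ?thesis using cP(1) allowed_slices_v[OF i] by (auto simp: L_def PiE_iff)
  qed
  moreover have "restrict L {u 0..u N} = c"
    using cP(1) by (auto simp: L_def PiE_iff extensional_def fun_eq_iff)
  ultimately show ?thesis by (auto simp: pinned_configs_def)
qed

lemma infsum_pinned_configs_weight:
  "(\<Sum>\<^sub>\<infinity>L\<in>pinned_configs. weight N u q L) = slice_sum (u 0) (u N) empty_part empty_part"
proof -
  let ?r = "\<lambda>L. restrict L {u 0..u N}"
  let ?P = "paths allowed_slices (u 0) (u N) empty_part empty_part"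
  let ?w = "\<lambda>c. \<Prod>k\<in>{u 0..<u N}. step_weight k (c k) (c (k + 1))"
  have fin_P: "finite ?P" by (rule finite_paths[OF finite_allowed_slices])
  have "finite pinned_configs"
    using restrict_pinned_in_paths
    by (intro finite_imageD[OF finite_subset[OF _ fin_P] inj_on_restrict_pinned]) auto
  then have "(\<Sum>\<^sub>\<infinity>L\<in>pinned_configs. weight N u q L) = (\<Sum>L\<in>pinned_configs. weight N u q L)" by simp
  also have "\<dots> = (\<Sum>L\<in>pinned_configs. ?w (?r L))"
    by (intro sum.cong refl) (simp add: pinned_configs_def weight_eq_prod_step_weight)
  also have "\<dots> = (\<Sum>c\<in>?r ` pinned_configs. ?w c)"
    by (rule sum.reindex[OF inj_on_restrict_pinned, unfolded comp_def, symmetric])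
  also have "\<dots> = (\<Sum>c\<in>?P. ?w c)"
  proof (rule sum.mono_neutral_left[OF fin_P])
    show "?r ` pinned_configs \<subseteq> ?P" using restrict_pinned_in_paths by auto
    show "\<forall>c\<in>?P - ?r ` pinned_configs. ?w c = 0" using path_extends_to_pinned by blast
  qed
  finally show ?thesis by (simp add: path_sum_def)
qed

end

theorem mainTheorem1:
  fixes N :: nat and u v :: "nat \<Rightarrow> int" and q :: "int \<Rightarrow> real"
    and lam :: "nat \<Rightarrow> nat \<Rightarrow> nat"
  assumes "N \<ge> 1"
    and "\<And>i. 1 \<le> i \<Longrightarrow> i \<le> N \<Longrightarrow> u (i - 1) < v i \<and> v i < u i"
    and "\<And>t. u 0 < t \<Longrightarrow> t < u N \<Longrightarrow> 0 < q t \<and> q t < 1"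
    and "\<And>i. 1 \<le> i \<Longrightarrow> i \<le> N \<Longrightarrow> lam i \<in> partitions"
  shows "prob N u v q (\<lambda>L. \<forall>i\<in>{1..N}. L (v i) = lam i) =
    (1 / partition_fn N u v q) * schur (lam 1) (Xminus u v q 1)
    * (\<Prod>i\<in>{1..<N}. (\<Sum>\<^sub>\<infinity>\<nu>\<in>partitions.
          skew_schur (lam i) \<nu> (Xplus u v q i) * skew_schur (lam (i + 1)) \<nu> (Xminus u v q (i + 1))))
    * schur (lam N) (Xplus u v q N)"
proof -
  interpret pinned_slices N u v q lam
  proof
    show "q t \<noteq> 0" if "u 0 < t" "t < u N" for t using assms(3)[OF that] by simp
  qed (use assms in auto)
  have "prob N u v q (\<lambda>L. \<forall>i\<in>{1..N}. L (v i) = lam i)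
      = (\<Sum>\<^sub>\<infinity>L\<in>pinned_configs. weight N u q L) / partition_fn N u v q"
    by (simp add: prob_def pinned_configs_def)
  also have "(\<Sum>\<^sub>\<infinity>L\<in>pinned_configs. weight N u q L) = slice_sum (u 0) (u N) empty_part empty_part"
    by (rule infsum_pinned_configs_weight)
  also have "\<dots> = schur (lam 1) (Xminus u v q 1) * (\<Prod>i\<in>{1..<N}. \<Sum>\<^sub>\<infinity>\<nu>\<in>partitions. gluing_term i \<nu>)
      * schur (lam N) (Xplus u v q N)"
    using slice_sum_prefix[of N empty_part] N_pos empty_part_in_allowed_slices_u[of N]
    by (simp add: schur_def)
  finally show ?thesis by (simp add: gluing_term_def)
qed

end
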